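(* Let $\mathcal H$ be a complex Hilbert space, $\Omega$ a set, $\mathcal A$ an algebra of subsets of $\Omega$, $\Sigma$ the σ-algebra generated by $\mathcal A$, and $\{p_A:A\in\mathcal A\}$ a projection valued measure on $\mathcal A$. Then there exists a projection valued measure $\{p_A:A\in\mathcal M\}$ extending it to $\mathcal M$. For every $\phi\in\mathcal H$ and $A\in\mathcal M$, $\|p_A\phi\|^2=M_\phi(A)$. For $A\in\mathcal M$ the range of $p_A$ is $\mathcal H_A=\{\phi\in\mathcal H:M_\phi(A)=\|\phi\|^2\}$, and $$\mathcal H_A=\bigcap\{\mathcal H_B:B\in\mathcal A_\sigma,\ A\subset B\}.$$ Furthermore, $\{p_A:A\in\Sigma\}$ is the unique projection valued measure on $\Sigma$ extending $\{p_A:A\in\mathcal A\}$.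
   Context: A projection is a bounded self-adjoint idempotent operator on $\mathcal H$. A family $\{p_A:A\in\mathcal C\}$ of projections indexed by an algebra (or σ-algebra) $\mathcal C$ of subsets of $\Omega$ is a projection valued measure if $p_\Omega=I$ and, whenever $A_1,A_2,\dots\in\mathcal C$ are disjoint with $A=\bigcup_iA_i\in\mathcal C$, $p_A=\sum_ip_{A_i}$ (meaning $p_A\phi=\sum_ip_{A_i}\phi$ for every $\phi$). For $\phi\in\mathcal H$ and $A\in\mathcal A$ put $M_\phi(A)=\|p_A\phi\|^2$; for arbitrary $A\subset\Omega$ let $M^*_\phi(A)=\inf\{\sum_{i\ge1}M_\phi(A_i):A\subset\bigcup_iA_i,\ A_i\in\mathcal A\}$ be the outer measure, $\mathcal M_\phi$ the σ-algebra of $M^*_\phi$-measurable sets (in Carathéodory's sense), and $M_\phi(A)=M^*_\phi(A)$ for $A\in\mathcal M_\phi$. Let $\mathcal M=\bigcap_{\phi\in\mathcal H}\mathcal M_\phi$, a σ-algebra with $\mathcal A\subset\Sigma\subset\mathcal M$. $\mathcal A_\sigma$ denotes the family of countable unions of sets in $\mathcal A$. For $A\in\mathcal A$, $\mathcal H_A$ denotes the range of $p_A$. *)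

theory Defs
  imports "HOL-Analysis.Analysis"
begin

text \<open>A complex Hilbert space is modelled as a real Hilbert space (type class
  real_inner + complete_space; the real inner product is the real part of the
  complex one) together with a complex structure J (multiplication by the
  imaginary unit): J is real-linear, J (J x) = - x and J is isometric for the
  inner product.  Complex scalar multiplication is (a + i b) x = a x + b J x.\<close>

definition complex_structure :: "('a::real_inner \<Rightarrow> 'a) \<Rightarrow> bool" where
  "complex_structure J \<longleftrightarrow> linear J \<and> (\<forall>x. J (J x) = - x) \<and> (\<forall>x y. inner (J x) (J y) = inner x y)"

text \<open>The complex inner product induced by J (linear in the first argument).\<close>
definition cinner :: "('a::real_inner \<Rightarrow> 'a) \<Rightarrow> 'a \<Rightarrow> 'a \<Rightarrow> complex" where
  "cinner J x y = Complex (inner x y) (inner x (J y))"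

definition bounded_clinear_op :: "('a::real_normed_vector \<Rightarrow> 'a) \<Rightarrow> ('a \<Rightarrow> 'a) \<Rightarrow> bool" where
  "bounded_clinear_op J p \<longleftrightarrow> bounded_linear p \<and> (\<forall>x. p (J x) = J (p x))"

definition is_projection :: "('a::real_inner \<Rightarrow> 'a) \<Rightarrow> ('a \<Rightarrow> 'a) \<Rightarrow> bool" where
  "is_projection J p \<longleftrightarrow> bounded_clinear_op J p \<and> p \<circ> p = p
      \<and> (\<forall>x y. cinner J (p x) y = cinner J x (p y))"

definition is_pvm :: "('a::real_inner \<Rightarrow> 'a) \<Rightarrow> 'b set \<Rightarrow> 'b set set \<Rightarrow> ('b set \<Rightarrow> 'a \<Rightarrow> 'a) \<Rightarrow> bool" where
  "is_pvm J \<Omega> C p \<longleftrightarrow> (\<forall>A\<in>C. is_projection J (p A)) \<and> p \<Omega> = id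
     \<and> (\<forall>F::nat \<Rightarrow> 'b set. range F \<subseteq> C \<longrightarrow> disjoint_family F \<longrightarrow> (\<Union>i. F i) \<in> C \<longrightarrow>
           (\<forall>\<phi>. (\<lambda>i. p (F i) \<phi>) sums p (\<Union>i. F i) \<phi>))"

definition Mstar :: "'b set set \<Rightarrow> ('b set \<Rightarrow> 'a::real_normed_vector \<Rightarrow> 'a) \<Rightarrow> 'a \<Rightarrow> 'b set \<Rightarrow> ennreal" where
  "Mstar \<A> p \<phi> S = (INF F\<in>{F::nat \<Rightarrow> 'b set. range F \<subseteq> \<A> \<and> S \<subseteq> (\<Union>i. F i)}.
                        \<Sum>i. ennreal ((norm (p (F i) \<phi>))\<^sup>2))"

definition Mphi_sets :: "'b set \<Rightarrow> 'b set set \<Rightarrow> ('b set \<Rightarrow> 'a::real_normed_vector \<Rightarrow> 'a) \<Rightarrow> 'a \<Rightarrow> 'b set set" where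
  "Mphi_sets \<Omega> \<A> p \<phi> = lambda_system \<Omega> (Pow \<Omega>) (Mstar \<A> p \<phi>)"

definition Msets :: "'b set \<Rightarrow> 'b set set \<Rightarrow> ('b set \<Rightarrow> 'a::real_normed_vector \<Rightarrow> 'a) \<Rightarrow> 'b set set" where
  "Msets \<Omega> \<A> p = {S. \<forall>\<phi>. S \<in> Mphi_sets \<Omega> \<A> p \<phi>}"

definition sigma_unions :: "'b set set \<Rightarrow> 'b set set" where
  "sigma_unions \<A> = {(\<Union>i. F i) | F::nat \<Rightarrow> 'b set. range F \<subseteq> \<A>}"

end

(*
  For each vector \<phi>, A \<mapsto> \<parallel>p A \<phi>\<parallel>\<^sup>2 is countably additive on the algebra \<A>, so Caratheodory's
  construction turns M\<^sup>*\<^sub>\<phi> into a finite measure on the M\<^sup>*\<^sub>\<phi>-measurable sets.  A set B \<in> \<A>\<^sub>\<sigma> is a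
  disjoint union of sets D i \<in> \<A>, and the orthogonal series \<Sum>i. p (D i) is a projection p\<^sub>B with
  \<parallel>p\<^sub>B \<phi>\<parallel>\<^sup>2 = M\<^sup>*\<^sub>\<phi>(B).  For an arbitrary A \<subseteq> \<Omega> let H\<^sub>A be the intersection of the ranges of
  the p\<^sub>B with A \<subseteq> B \<in> \<A>\<^sub>\<sigma>.  If B\<^sub>n \<in> \<A>\<^sub>\<sigma> decrease with M\<^sup>*\<^sub>\<phi>(B\<^sub>n) \<rightarrow> M\<^sup>*\<^sub>\<phi>(A), then
  \<parallel>p\<^sub>B\<^sub>n \<phi> - p\<^sub>B\<^sub>m \<phi>\<parallel>\<^sup>2 = M\<^sup>*\<^sub>\<phi>(B\<^sub>n) - M\<^sup>*\<^sub>\<phi>(B\<^sub>m), so p\<^sub>B\<^sub>n \<phi> converges; the limit is the orthogonal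
  projection of \<phi> onto H\<^sub>A and has squared norm M\<^sup>*\<^sub>\<phi>(A).  The projection onto H\<^sub>A is the extension:
  on measurable sets additivity of M\<^sup>*\<^sub>\<phi> becomes additivity of the projections, since a
  self-adjoint operator is determined by its quadratic form, and continuity of the measures
  gives countable additivity.
*)

theory Submission
  imports Defs
begin

lemma complex_structure_skew_adjoint:
  assumes "complex_structure J"
  shows "inner (J x) y = - inner x (J y)"
proof -
  have "inner (J x) y = inner (J (J x)) (J y)" using assms unfolding complex_structure_def by metis
  also have "\<dots> = - inner x (J y)" using assms unfolding complex_structure_def by simp
  finally show ?thesis .
qed

lemma complex_structure_norm: "complex_structure J \<Longrightarrow> norm (J x) = norm x"
  unfolding complex_structure_def by (simp add: norm_eq_sqrt_inner)

lemma complex_structure_bounded_linear: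
  assumes "complex_structure J"
  shows "bounded_linear J"
proof -
  interpret linear J using assms unfolding complex_structure_def by simp
  show ?thesis by unfold_locales (rule exI[of _ 1], simp add: complex_structure_norm[OF assms])
qed

lemma self_adjoint_eqI:
  fixes S T :: "'a::real_inner \<Rightarrow> 'a"
  assumes "linear S" "linear T"
    and "\<And>x y. inner (S x) y = inner x (S y)" "\<And>x y. inner (T x) y = inner x (T y)"
    and "\<And>x. inner (S x) x = inner (T x) x"
  shows "S = T"
proof -
  define D where "D x = S x - T x" for x
  interpret linear D unfolding D_def using assms(1,2) by (rule linear_compose_sub)
  have adj: "inner (D x) y = inner x (D y)" for x y
    using assms(3,4) by (simp add: D_def inner_diff_left inner_diff_right)
  have form: "inner (D x) x = 0" for x
    using assms(5) by (simp add: D_def inner_diff_left)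
  have "D x = 0" for x
  proof -
    \<comment> \<open>polarization of the vanishing quadratic form at \<open>x + D x\<close>\<close>
    have "0 = inner (D (x + D x)) (x + D x)" by (rule form[symmetric])
    also have "\<dots> = 2 * inner (D x) (D x)"
      using adj[of "D x" x] form[of x] form[of "D x"]
      by (simp add: add inner_add_left inner_add_right inner_commute)
    finally show ?thesis by simp
  qed
  thus ?thesis by (auto simp: D_def fun_eq_iff)
qed

lemma projection_self_adjoint: "is_projection J P \<Longrightarrow> inner (P x) y = inner x (P y)"
  unfolding is_projection_def cinner_def by (metis complex.inject)

lemma projection_idem: "is_projection J P \<Longrightarrow> P (P x) = P x"
  unfolding is_projection_def by (metis comp_apply)

lemma projection_bounded_linear: "is_projection J P \<Longrightarrow> bounded_linear P"
  unfolding is_projection_def bounded_clinear_op_def by simp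

lemma projection_linear: "is_projection J P \<Longrightarrow> linear P"
  using projection_bounded_linear bounded_linear.linear by blast

lemma projection_commute_J: "is_projection J P \<Longrightarrow> P (J x) = J (P x)"
  unfolding is_projection_def bounded_clinear_op_def by simp

lemma projection_inner_self: "is_projection J P \<Longrightarrow> inner (P x) x = (norm (P x))\<^sup>2"
  by (metis power2_norm_eq_inner projection_idem projection_self_adjoint)

lemma range_projection: "is_projection J P \<Longrightarrow> range P = {x. P x = x}"
  by (metis (mono_tags, lifting) projection_idem rangeE rangeI mem_Collect_eq subsetI subset_antisym)

lemma projection_fixed_iff_norm:
  assumes "is_projection J P"
  shows "P x = x \<longleftrightarrow> norm (P x) = norm x"
proof
  assume "norm (P x) = norm x"
  have "(norm (x - P x))\<^sup>2 = (norm x)\<^sup>2 - 2 * inner (P x) x + (norm (P x))\<^sup>2"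
    by (simp add: power2_norm_eq_inner inner_diff_left inner_diff_right inner_commute)
  also have "\<dots> = 0"
    using \<open>norm (P x) = norm x\<close> projection_inner_self[OF assms, of x] by simp
  finally show "P x = x" by simp
qed simp

lemma projectionI:
  fixes P :: "'a::real_inner \<Rightarrow> 'a"
  assumes "linear P" "\<And>x y. inner (P x) y = inner x (P y)" "\<And>x. P (J x) = J (P x)"
    and "\<And>x. inner (P x) x = inner (P x) (P x)"
  shows "is_projection J P"
proof -
  interpret linear P by fact
  have "norm (P x) \<le> norm x" for x
  proof -
    have "norm (P x) * norm (P x) \<le> norm (P x) * norm x"
      using assms(4)[of x] Cauchy_Schwarz_ineq2[of "P x" x] by (simp add: norm_eq_sqrt_inner)
    thus ?thesis by (cases "norm (P x) = 0") auto
  qed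
  hence "bounded_linear P" by unfold_locales (rule exI[of _ 1], simp)
  moreover have "P \<circ> P = P"
  proof (rule self_adjoint_eqI)
    show "linear (P \<circ> P)" by (rule linear_compose[OF assms(1) assms(1)])
    show "inner ((P \<circ> P) x) y = inner x ((P \<circ> P) y)" for x y by (simp add: assms(2))
    show "inner ((P \<circ> P) x) x = inner (P x) x" for x
      using assms(2,4) by (simp add: inner_commute)
  qed (rule assms(1), rule assms(2))
  ultimately show ?thesis using assms(2,3)
    unfolding is_projection_def bounded_clinear_op_def cinner_def by (simp add: assms(3)[symmetric])
qed

lemma projection_eqI:
  assumes "is_projection J P" "is_projection J Q" "\<And>x. norm (P x) = norm (Q x)"
  shows "P = Q"
  using assms by (intro self_adjoint_eqI projection_linear projection_self_adjoint)
    (auto simp: projection_inner_self)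

lemma projection_add_eqI:
  assumes "is_projection J P" "is_projection J Q" "is_projection J R"
    and "\<And>x. (norm (R x))\<^sup>2 = (norm (P x))\<^sup>2 + (norm (Q x))\<^sup>2"
  shows "R = (\<lambda>x. P x + Q x)"
proof (rule self_adjoint_eqI)
  show "linear (\<lambda>x. P x + Q x)"
    using assms(1,2) by (intro linear_compose_add projection_linear)
  show "inner (P x + Q x) y = inner x (P y + Q y)" for x y
    using assms(1,2) by (simp add: inner_add_left inner_add_right projection_self_adjoint)
  show "inner (R x) x = inner (P x + Q x) x" for x
    using assms by (simp add: inner_add_left projection_inner_self)
qed (use assms(3) in \<open>auto intro: projection_linear projection_self_adjoint\<close>)

definition orthogonal_projection :: "'a::real_inner set \<Rightarrow> 'a \<Rightarrow> 'a" where
  "orthogonal_projection S x = (THE y. y \<in> S \<and> (\<forall>z\<in>S. inner (x - y) z = 0))"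

lemma orthogonal_projection_eqI:
  assumes "subspace S" "y \<in> S" "\<And>z. z \<in> S \<Longrightarrow> inner (x - y) z = 0"
  shows "orthogonal_projection S x = y"
  unfolding orthogonal_projection_def
proof (rule the_equality)
  fix y' assume y': "y' \<in> S \<and> (\<forall>z\<in>S. inner (x - y') z = 0)"
  have "y' - y \<in> S" using assms(1,2) y' by (simp add: subspace_diff)
  hence "inner (x - y) (y' - y) - inner (x - y') (y' - y) = 0" using assms(3) y' by simp
  hence "inner (y' - y) (y' - y) = 0" by (simp add: inner_diff_left)
  thus "y' = y" by simp
qed (use assms in blast)

lemma orthogonal_projection_in:
  assumes "subspace S" "\<exists>y\<in>S. \<forall>z\<in>S. inner (x - y) z = 0"
  shows "orthogonal_projection S x \<in> S"
    and "\<And>z. z \<in> S \<Longrightarrow> inner (x - orthogonal_projection S x) z = 0"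
proof -
  obtain y where y: "y \<in> S" "\<forall>z\<in>S. inner (x - y) z = 0"
    using assms(2) by blast
  hence "orthogonal_projection S x = y"
    by (intro orthogonal_projection_eqI[OF assms(1)]) auto
  with y show "orthogonal_projection S x \<in> S" "\<And>z. z \<in> S \<Longrightarrow> inner (x - orthogonal_projection S x) z = 0"
    by auto
qed

lemma linear_orthogonal_projection:
  assumes S: "subspace S" and decomposition: "\<And>x. \<exists>y\<in>S. \<forall>z\<in>S. inner (x - y) z = 0"
  shows "linear (orthogonal_projection S)"
proof (rule linearI)
  let ?P = "orthogonal_projection S"
  note in_S = orthogonal_projection_in(1)[OF S decomposition]
    and orth = orthogonal_projection_in(2)[OF S decomposition]
  fix x y
  have "inner (x + y - (?P x + ?P y)) z = inner (x - ?P x) z + inner (y - ?P y) z" for z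
    by (simp add: inner_diff_left inner_add_left)
  thus "?P (x + y) = ?P x + ?P y"
    using S in_S orth by (intro orthogonal_projection_eqI) (simp_all add: subspace_add)
  fix c :: real
  have "inner (c *\<^sub>R x - c *\<^sub>R ?P x) z = c * inner (x - ?P x) z" for z
    by (simp add: inner_diff_left right_diff_distrib)
  thus "?P (c *\<^sub>R x) = c *\<^sub>R ?P x"
    using S in_S orth by (intro orthogonal_projection_eqI) (simp_all add: subspace_scale)
qed

lemma range_orthogonal_projection:
  assumes S: "subspace S" and decomposition: "\<And>x. \<exists>y\<in>S. \<forall>z\<in>S. inner (x - y) z = 0"
  shows "range (orthogonal_projection S) = S"
proof
  show "range (orthogonal_projection S) \<subseteq> S"
    using orthogonal_projection_in(1)[OF S decomposition] by blast
  show "S \<subseteq> range (orthogonal_projection S)"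
  proof
    fix x assume "x \<in> S"
    hence "x = orthogonal_projection S x"
      using S by (intro orthogonal_projection_eqI[symmetric]) auto
    thus "x \<in> range (orthogonal_projection S)" by (rule range_eqI)
  qed
qed

lemma projection_orthogonal_projection:
  assumes J: "complex_structure J" and S: "subspace S" "\<And>x. x \<in> S \<Longrightarrow> J x \<in> S"
    and decomposition: "\<And>x. \<exists>y\<in>S. \<forall>z\<in>S. inner (x - y) z = 0"
  shows "is_projection J (orthogonal_projection S)"
proof (rule projectionI)
  let ?P = "orthogonal_projection S"
  note in_S = orthogonal_projection_in(1)[OF S(1) decomposition]
    and orth = orthogonal_projection_in(2)[OF S(1) decomposition]
  show "linear ?P" using S(1) decomposition by (rule linear_orthogonal_projection)
  show "?P (J x) = J (?P x)" for x
  proof (rule orthogonal_projection_eqI[OF S(1) S(2)[OF in_S]])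
    have "J x - J (?P x) = J (x - ?P x)"
      using J unfolding complex_structure_def by (simp add: linear_diff)
    thus "inner (J x - J (?P x)) z = 0" if "z \<in> S" for z
      using orth[OF S(2)[OF that]] complex_structure_skew_adjoint[OF J] by simp
  qed
  have self: "inner (?P x) y = inner (?P x) (?P y)" for x y
    using orth[OF in_S, of y x] inner_commute[of "?P x" y] inner_commute[of "?P x" "?P y"]
    by (simp add: inner_diff_left)
  thus "inner (?P x) x = inner (?P x) (?P x)" for x .
  show "inner (?P x) y = inner x (?P y)" for x y
  proof -
    have "inner (?P x) y = inner (?P y) (?P x)"
      using self[of x y] by (simp only: inner_commute[of "?P x" "?P y"])
    also have "\<dots> = inner x (?P y)"
      using self[of y x] by (simp only: inner_commute[of x "?P y"])
    finally show ?thesis .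
  qed
qed

lemma Cauchy_if_norm_sq_diff_le:
  fixes x :: "nat \<Rightarrow> 'a::real_normed_vector" and a :: "nat \<Rightarrow> real"
  assumes "convergent a" and le: "\<And>m n. m \<le> n \<Longrightarrow> (norm (x m - x n))\<^sup>2 \<le> \<bar>a m - a n\<bar>"
  shows "Cauchy x"
proof (rule CauchyI)
  fix e :: real assume e: "0 < e"
  obtain N where N: "\<And>m n. m \<ge> N \<Longrightarrow> n \<ge> N \<Longrightarrow> \<bar>a m - a n\<bar> < e\<^sup>2"
    using CauchyD[OF \<open>convergent a\<close>[folded Cauchy_convergent_iff], of "e\<^sup>2"] e by auto
  have close: "norm (x m - x n) < e" if "N \<le> m" "m \<le> n" for m n
  proof (rule power_less_imp_less_base)
    show "(norm (x m - x n))\<^sup>2 < e\<^sup>2"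
      using le[OF that(2)] N[OF that(1) order_trans[OF that]] by linarith
  qed (use e in simp)
  show "\<exists>M. \<forall>m\<ge>M. \<forall>n\<ge>M. norm (x m - x n) < e"
  proof (intro exI allI impI)
    fix m n assume "N \<le> m" "N \<le> n"
    thus "norm (x m - x n) < e"
      using close[of m n] close[of n m] by (cases "m \<le> n") (auto simp: norm_minus_commute)
  qed
qed

lemma
  fixes x :: "nat \<Rightarrow> 'a::{real_inner, complete_space}"
  assumes orth: "\<And>i j. i \<noteq> j \<Longrightarrow> inner (x i) (x j) = 0"
    and summ: "summable (\<lambda>i. (norm (x i))\<^sup>2)"
  shows summable_orthogonal: "summable x"
    and sums_norm_sq_orthogonal: "(\<lambda>i. (norm (x i))\<^sup>2) sums (norm (\<Sum>i. x i))\<^sup>2"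
proof -
  have pyth: "(norm (\<Sum>i\<in>I. x i))\<^sup>2 = (\<Sum>i\<in>I. (norm (x i))\<^sup>2)" if "finite I" for I
    using that orth by (intro norm_sum_Pythagorean) (auto simp: pairwise_def orthogonal_def)
  have "Cauchy (\<lambda>n. \<Sum>i<n. x i)"
  proof (rule Cauchy_if_norm_sq_diff_le)
    show "convergent (\<lambda>n. \<Sum>i<n. (norm (x i))\<^sup>2)"
      using summ by (simp add: summable_iff_convergent)
    fix m n :: nat assume "m \<le> n"
    hence tail: "(\<Sum>i<n. x i) - (\<Sum>i<m. x i) = (\<Sum>i\<in>{m..<n}. x i)"
      and tail_norms: "(\<Sum>i<n. (norm (x i))\<^sup>2) - (\<Sum>i<m. (norm (x i))\<^sup>2) = (\<Sum>i\<in>{m..<n}. (norm (x i))\<^sup>2)"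
      using sum_diff_nat_ivl[of 0 m n] by (simp_all add: lessThan_atLeast0)
    have "(norm ((\<Sum>i<m. x i) - (\<Sum>i<n. x i)))\<^sup>2 = (\<Sum>i\<in>{m..<n}. (norm (x i))\<^sup>2)"
      by (simp only: norm_minus_commute[of "\<Sum>i<m. x i"] tail pyth[OF finite_atLeastLessThan])
    also have "\<dots> \<le> \<bar>(\<Sum>i<m. (norm (x i))\<^sup>2) - (\<Sum>i<n. (norm (x i))\<^sup>2)\<bar>"
      unfolding tail_norms[symmetric] by (subst abs_minus_commute) (rule abs_ge_self)
    finally show "(norm ((\<Sum>i<m. x i) - (\<Sum>i<n. x i)))\<^sup>2
        \<le> \<bar>(\<Sum>i<m. (norm (x i))\<^sup>2) - (\<Sum>i<n. (norm (x i))\<^sup>2)\<bar>" .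
  qed
  thus "summable x" by (simp add: summable_iff_convergent Cauchy_convergent_iff)
  hence "(\<lambda>n. (norm (\<Sum>i<n. x i))\<^sup>2) \<longlonglongrightarrow> (norm (\<Sum>i. x i))\<^sup>2"
    by (intro tendsto_power tendsto_norm summable_LIMSEQ)
  thus "(\<lambda>i. (norm (x i))\<^sup>2) sums (norm (\<Sum>i. x i))\<^sup>2"
    unfolding sums_def by (simp only: pyth[OF finite_lessThan])
qed

lemma projection_suminf:
  fixes P :: "nat \<Rightarrow> 'a::{real_inner, complete_space} \<Rightarrow> 'a"
  assumes J: "complex_structure J" and P: "\<And>i. is_projection J (P i)"
    and orth: "\<And>i j x. i \<noteq> j \<Longrightarrow> inner (P i x) (P j x) = 0"
    and summ: "\<And>x. summable (\<lambda>i. (norm (P i x))\<^sup>2)"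
  shows "is_projection J (\<lambda>x. \<Sum>i. P i x)"
proof (rule projectionI)
  have summable: "summable (\<lambda>i. P i x)" for x
    by (rule summable_orthogonal[of "\<lambda>i. P i x", OF orth summ])
  have inner_suminf: "inner (\<Sum>i. P i x) y = (\<Sum>i. inner (P i x) y)" for x y
    using bounded_linear.suminf[OF bounded_linear_inner_left summable[of x]] by simp
  have linear_P: "linear (P i)" for i
    using P by (rule projection_linear)
  show "linear (\<lambda>x. \<Sum>i. P i x)"
  proof (rule linearI)
    fix x y :: 'a and c :: real
    show "(\<Sum>i. P i (x + y)) = (\<Sum>i. P i x) + (\<Sum>i. P i y)"
      using suminf_add[OF summable[of x] summable[of y]] by (simp add: linear_add[OF linear_P])
    show "(\<Sum>i. P i (c *\<^sub>R x)) = c *\<^sub>R (\<Sum>i. P i x)"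
      using suminf_scaleR_right[OF summable[of x]] by (simp add: linear_scale[OF linear_P])
  qed
  show "inner (\<Sum>i. P i x) y = inner x (\<Sum>i. P i y)" for x y
  proof -
    have swap: "inner (P i x) y = inner (P i y) x" for i
      using projection_self_adjoint[OF P, of i x y] by (simp only: inner_commute[of x "P i y"])
    have "inner (\<Sum>i. P i x) y = inner (\<Sum>i. P i y) x"
      unfolding inner_suminf swap ..
    thus ?thesis by (simp only: inner_commute[of "\<Sum>i. P i y" x])
  qed
  show "(\<Sum>i. P i (J x)) = J (\<Sum>i. P i x)" for x
    using bounded_linear.suminf[OF complex_structure_bounded_linear[OF J] summable[of x]] P
    by (simp add: projection_commute_J)
  show "inner (\<Sum>i. P i x) x = inner (\<Sum>i. P i x) (\<Sum>i. P i x)" for x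
  proof -
    have "inner (\<Sum>i. P i x) x = (\<Sum>i. (norm (P i x))\<^sup>2)"
      unfolding inner_suminf by (simp add: projection_inner_self[OF P])
    also have "\<dots> = (norm (\<Sum>i. P i x))\<^sup>2"
      using sums_norm_sq_orthogonal[of "\<lambda>i. P i x", OF orth summ] by (simp add: sums_iff)
    finally show ?thesis by (simp only: power2_norm_eq_inner)
  qed
qed

lemma tendsto_if_norm_sq_diff_tendsto_0:
  fixes f g :: "_ \<Rightarrow> 'a::real_normed_vector"
  assumes "((\<lambda>n. (norm (f n - g n))\<^sup>2) \<longlongrightarrow> 0) F" "(f \<longlongrightarrow> l) F"
  shows "(g \<longlongrightarrow> l) F"
proof -
  have "((\<lambda>n. sqrt ((norm (f n - g n))\<^sup>2)) \<longlongrightarrow> sqrt 0) F"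
    using assms(1) by (rule tendsto_real_sqrt)
  hence "((\<lambda>n. f n - g n) \<longlongrightarrow> 0) F" by (simp add: tendsto_norm_zero_iff)
  from tendsto_diff[OF assms(2) this] show ?thesis by simp
qed

lemma is_pvm_projection: "is_pvm J \<Omega> C p \<Longrightarrow> A \<in> C \<Longrightarrow> is_projection J (p A)"
  unfolding is_pvm_def by blast

lemma is_pvm_subset: "is_pvm J \<Omega> C p \<Longrightarrow> C' \<subseteq> C \<Longrightarrow> is_pvm J \<Omega> C' p"
  unfolding is_pvm_def by blast

lemma is_pvm_sums:
  "is_pvm J \<Omega> C p \<Longrightarrow> range F \<subseteq> C \<Longrightarrow> disjoint_family F \<Longrightarrow> (\<Union>i. F i) \<in> C
    \<Longrightarrow> (\<lambda>i. p (F i) x) sums p (\<Union>i. F i) x"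
  unfolding is_pvm_def by blast

lemma pvm_empty:
  assumes "is_pvm J \<Omega> C p" "{} \<in> C"
  shows "p {} x = 0"
proof -
  have "(\<lambda>i::nat. p {} x) sums p {} x"
    using is_pvm_sums[OF assms(1), of "\<lambda>_. {}"] assms(2) by (simp add: disjoint_family_on_def)
  hence "(\<lambda>i::nat. p {} x) \<longlonglongrightarrow> 0" by (rule summable_LIMSEQ_zero[OF sums_summable])
  thus ?thesis by (simp add: LIMSEQ_const_iff)
qed

lemma pvm_Un:
  assumes "is_pvm J \<Omega> C p" "algebra \<Omega> C" "A \<in> C" "B \<in> C" "A \<inter> B = {}"
  shows "p (A \<union> B) x = p A x + p B x"
proof -
  interpret algebra \<Omega> C by fact
  define F where "F = (\<lambda>i::nat. if i = 0 then A else if i = 1 then B else {})"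
  have "(\<Union>i. F i) \<subseteq> A \<union> B" by (auto simp: F_def split: if_splits)
  moreover have "F 0 = A" "F 1 = B" by (simp_all add: F_def)
  ultimately have U: "(\<Union>i. F i) = A \<union> B" by blast
  have "range F \<subseteq> C" "disjoint_family F"
    using assms(3-5) by (auto simp: F_def disjoint_family_on_def)
  from is_pvm_sums[OF assms(1) this, of x]
  have "(\<lambda>i. p (F i) x) sums p (A \<union> B) x" using Un[OF assms(3,4)] by (simp add: U)
  moreover have "(\<lambda>i. p (F i) x) sums (p A x + p B x)"
    using sums_finite[of "{0, 1}" "\<lambda>i. p (F i) x"] by (simp add: F_def pvm_empty[OF assms(1)])
  ultimately show ?thesis by (rule sums_unique2)
qed

lemma pvm_orthogonal:
  assumes "is_pvm J \<Omega> C p" "algebra \<Omega> C" "A \<in> C" "B \<in> C" "A \<inter> B = {}"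
  shows "inner (p A x) (p B x) = 0"
proof -
  interpret algebra \<Omega> C by fact
  note projection = is_pvm_projection[OF assms(1)]
  have sum: "p (A \<union> B) x = p A x + p B x" by (rule pvm_Un[OF assms])
  have "(norm (p A x + p B x))\<^sup>2 = inner (p A x + p B x) x"
    using projection_inner_self[OF projection[OF Un[OF assms(3,4)]], of x] by (simp add: sum)
  also have "\<dots> = (norm (p A x))\<^sup>2 + (norm (p B x))\<^sup>2"
    by (simp add: inner_add_left projection_inner_self[OF projection] assms(3,4))
  finally show ?thesis
    by (simp add: power2_norm_eq_inner inner_add_left inner_add_right inner_commute)
qed

lemma pvm_norm_sq_sums:
  fixes F :: "nat \<Rightarrow> 'b set"
  assumes "is_pvm J \<Omega> C p" "algebra \<Omega> C" "range F \<subseteq> C" "disjoint_family F" "(\<Union>i. F i) \<in> C"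
  shows "(\<lambda>i. (norm (p (F i) x))\<^sup>2) sums (norm (p (\<Union>i. F i) x))\<^sup>2"
proof -
  have "(\<lambda>n. \<Sum>i<n. p (F i) x) \<longlonglongrightarrow> p (\<Union>i. F i) x"
    using is_pvm_sums[OF assms(1,3-5)] unfolding sums_def .
  hence "(\<lambda>n. (norm (\<Sum>i<n. p (F i) x))\<^sup>2) \<longlonglongrightarrow> (norm (p (\<Union>i. F i) x))\<^sup>2"
    by (intro tendsto_power tendsto_norm)
  moreover have "inner (p (F i) x) (p (F j) x) = 0" if "i \<noteq> j" for i j
    using assms(3,4) that by (intro pvm_orthogonal[OF assms(1,2)]) (auto simp: disjoint_family_on_def)
  hence "(norm (\<Sum>i<n. p (F i) x))\<^sup>2 = (\<Sum>i<n. (norm (p (F i) x))\<^sup>2)" for n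
    by (intro norm_sum_Pythagorean) (auto simp: pairwise_def orthogonal_def)
  ultimately show ?thesis unfolding sums_def by simp
qed

lemma pvm_countably_additive:
  assumes "is_pvm J \<Omega> C p" "algebra \<Omega> C"
  shows "countably_additive C (\<lambda>A. ennreal ((norm (p A x))\<^sup>2))"
  unfolding countably_additive_def
proof (intro allI impI)
  fix F :: "nat \<Rightarrow> _" assume "range F \<subseteq> C" "disjoint_family F" "(\<Union>i. F i) \<in> C"
  from pvm_norm_sq_sums[OF assms this]
  have sums: "(\<lambda>i. (norm (p (F i) x))\<^sup>2) sums (norm (p (\<Union>i. F i) x))\<^sup>2" .
  have "(\<Sum>i. ennreal ((norm (p (F i) x))\<^sup>2)) = ennreal (\<Sum>i. (norm (p (F i) x))\<^sup>2)"
    using sums_summable[OF sums] by (rule suminf_ennreal2[rotated]) simp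
  also have "(\<Sum>i. (norm (p (F i) x))\<^sup>2) = (norm (p (\<Union>i. F i) x))\<^sup>2"
    using sums by (rule sums_unique[symmetric])
  finally show "(\<Sum>i. ennreal ((norm (p (F i) x))\<^sup>2)) = ennreal ((norm (p (\<Union>i. F i) x))\<^sup>2)" .
qed

lemma pvm_positive:
  assumes "is_pvm J \<Omega> C p" "algebra \<Omega> C"
  shows "positive C (\<lambda>A. ennreal ((norm (p A x))\<^sup>2))"
proof -
  interpret algebra \<Omega> C by fact
  show ?thesis using pvm_empty[OF assms(1) empty_sets] by (simp add: positive_def)
qed

text \<open>A projection is determined by the norms \<open>\<parallel>r A x\<parallel>\<^sup>2\<close>, and for fixed \<open>x\<close> these form a finite
  measure on \<open>sigma_sets \<Omega> \<A>\<close>, which is determined by its values on the generator \<open>\<A>\<close>.\<close>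
lemma pvm_sigma_sets_unique:
  fixes r r' :: "'b set \<Rightarrow> 'a::real_inner \<Rightarrow> 'a"
  assumes "algebra \<Omega> \<A>"
    and pvm: "is_pvm J \<Omega> (sigma_sets \<Omega> \<A>) r" "is_pvm J \<Omega> (sigma_sets \<Omega> \<A>) r'"
    and agree: "\<And>A. A \<in> \<A> \<Longrightarrow> r A = r' A"
    and A: "A \<in> sigma_sets \<Omega> \<A>"
  shows "r A = r' A"
proof -
  interpret algebra \<Omega> \<A> by fact
  let ?S = "sigma_sets \<Omega> \<A>"
  have sigma: "sigma_algebra \<Omega> ?S" by (rule sigma_algebra_sigma_sets[OF space_closed])
  hence alg: "algebra \<Omega> ?S" by (simp add: sigma_algebra_def)
  define \<mu> where "\<mu> q x = measure_of \<Omega> ?S (\<lambda>X. ennreal ((norm (q X x))\<^sup>2))"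
    for q :: "'b set \<Rightarrow> 'a \<Rightarrow> 'a" and x
  have emeasure_\<mu>: "emeasure (\<mu> q x) X = ennreal ((norm (q X x))\<^sup>2)"
    if "is_pvm J \<Omega> ?S q" "X \<in> ?S" for q x X
    unfolding \<mu>_def using sigma pvm_positive[OF that(1) alg] pvm_countably_additive[OF that(1) alg] that(2)
    by (rule emeasure_measure_of_sigma)
  have "\<mu> r x = \<mu> r' x" for x
  proof (rule measure_eqI_generator_eq[where E = \<A> and \<Omega> = \<Omega> and A = "\<lambda>_. \<Omega>"])
    show "Int_stable \<A>" unfolding Int_stable_def using Int by blast
    show "\<A> \<subseteq> Pow \<Omega>" by (rule space_closed)
    show "emeasure (\<mu> r x) X = emeasure (\<mu> r' x) X" if "X \<in> \<A>" for X
      using emeasure_\<mu>[OF pvm(1) sigma_sets.Basic[OF that]] emeasure_\<mu>[OF pvm(2) sigma_sets.Basic[OF that]]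
      by (simp add: agree[OF that])
    show "sets (\<mu> r x) = ?S" "sets (\<mu> r' x) = ?S"
      unfolding \<mu>_def by (simp_all add: sigma_algebra.sets_measure_of_eq[OF sigma])
    show "range (\<lambda>_. \<Omega>) \<subseteq> \<A>" using top by blast
    show "emeasure (\<mu> r x) \<Omega> \<noteq> \<infinity>"
      using emeasure_\<mu>[OF pvm(1) sigma_sets_top] by simp
  qed simp
  hence "ennreal ((norm (r A x))\<^sup>2) = ennreal ((norm (r' A x))\<^sup>2)" for x
    using emeasure_\<mu>[OF pvm(1) A] emeasure_\<mu>[OF pvm(2) A] by metis
  hence "norm (r A x) = norm (r' A x)" for x
    by (simp add: power2_eq_iff_nonneg)
  with is_pvm_projection[OF pvm(1) A] is_pvm_projection[OF pvm(2) A] show ?thesis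
    by (rule projection_eqI)
qed

lemma sigma_unionsI: "range (F :: nat \<Rightarrow> 'a set) \<subseteq> \<A> \<Longrightarrow> (\<Union>i. F i) \<in> sigma_unions \<A>"
  unfolding sigma_unions_def by blast

lemma sigma_unionsE:
  assumes "B \<in> sigma_unions \<A>"
  obtains F :: "nat \<Rightarrow> 'a set" where "range F \<subseteq> \<A>" "B = (\<Union>i. F i)"
  using assms unfolding sigma_unions_def by blast

lemma (in ring_of_sets) sigma_unions_disjoint:
  assumes "B \<in> sigma_unions M"
  obtains D :: "nat \<Rightarrow> 'a set" where "range D \<subseteq> M" "disjoint_family D" "B = (\<Union>i. D i)"
proof -
  obtain F :: "nat \<Rightarrow> 'a set" where F: "range F \<subseteq> M" "B = (\<Union>i. F i)"
    using assms by (rule sigma_unionsE)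
  have "range (disjointed F) \<subseteq> M" using F(1) by (rule range_disjointed_sets)
  moreover have "disjoint_family (disjointed F)" by (rule disjoint_family_disjointed)
  moreover have "B = (\<Union>i. disjointed F i)" using F(2) by (simp add: UN_disjointed_eq)
  ultimately show ?thesis by (rule that)
qed

lemma (in ring_of_sets) sigma_unions_Int:
  assumes "B \<in> sigma_unions M" "B' \<in> sigma_unions M"
  shows "B \<inter> B' \<in> sigma_unions M"
proof -
  obtain F :: "nat \<Rightarrow> 'a set" where F: "range F \<subseteq> M" "B = (\<Union>i. F i)"
    using assms(1) by (rule sigma_unionsE)
  obtain G :: "nat \<Rightarrow> 'a set" where G: "range G \<subseteq> M" "B' = (\<Union>i. G i)"
    using assms(2) by (rule sigma_unionsE)
  define H where "H k = F (fst (prod_decode k)) \<inter> G (snd (prod_decode k))" for k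
  have "H k \<in> M" for k
    unfolding H_def using F(1) G(1) by (intro Int) auto
  hence "(\<Union>k. H k) \<in> sigma_unions M" by (intro sigma_unionsI) auto
  moreover have "B \<inter> B' = (\<Union>k. H k)"
  proof
    show "B \<inter> B' \<subseteq> (\<Union>k. H k)"
    proof
      fix x assume "x \<in> B \<inter> B'"
      then obtain i j where "x \<in> F i" "x \<in> G j" using F(2) G(2) by blast
      hence "x \<in> H (prod_encode (i, j))" unfolding H_def by simp
      thus "x \<in> (\<Union>k. H k)" by blast
    qed
    show "(\<Union>k. H k) \<subseteq> B \<inter> B'" using F(2) G(2) unfolding H_def by blast
  qed
  ultimately show ?thesis by simp
qed

locale pvm_algebra =
  fixes J :: "'a::{real_inner, complete_space} \<Rightarrow> 'a"
    and \<Omega> :: "'b set" and \<A> :: "'b set set" and p :: "'b set \<Rightarrow> 'a \<Rightarrow> 'a"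
  assumes complex_J: "complex_structure J"
    and algebra_\<A>: "algebra \<Omega> \<A>"
    and pvm_p: "is_pvm J \<Omega> \<A> p"
begin

interpretation \<A>: algebra \<Omega> \<A> by (rule algebra_\<A>)

definition M :: "'a \<Rightarrow> 'b set \<Rightarrow> ennreal" where
  "M \<phi> A = ennreal ((norm (p A \<phi>))\<^sup>2)"

lemma M_positive: "positive \<A> (M \<phi>)"
  unfolding M_def by (rule pvm_positive[OF pvm_p algebra_\<A>])

lemma M_countably_additive: "countably_additive \<A> (M \<phi>)"
  unfolding M_def by (rule pvm_countably_additive[OF pvm_p algebra_\<A>])

lemma M_increasing: "increasing \<A> (M \<phi>)"
  using M_positive M_countably_additive
  by (intro \<A>.additive_increasing \<A>.countably_additive_additive)

lemma Mstar_eq_outer_measure: "Mstar \<A> p \<phi> = outer_measure \<A> (M \<phi>)"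
proof
  fix X
  let ?covers = "{F::nat \<Rightarrow> 'b set. range F \<subseteq> \<A> \<and> X \<subseteq> (\<Union>i. F i)}"
  let ?disjoint_covers = "{F::nat \<Rightarrow> 'b set. range F \<subseteq> \<A> \<and> disjoint_family F \<and> X \<subseteq> (\<Union>i. F i)}"
  have "(INF F\<in>?covers. \<Sum>i. M \<phi> (F i)) = (INF F\<in>?disjoint_covers. \<Sum>i. M \<phi> (F i))"
  proof (rule antisym)
    show "(INF F\<in>?covers. \<Sum>i. M \<phi> (F i)) \<le> (INF F\<in>?disjoint_covers. \<Sum>i. M \<phi> (F i))"
      by (rule INF_superset_mono) auto
    show "(INF F\<in>?disjoint_covers. \<Sum>i. M \<phi> (F i)) \<le> (INF F\<in>?covers. \<Sum>i. M \<phi> (F i))"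
    proof (rule INF_greatest)
      fix F assume F: "F \<in> ?covers"
      \<comment> \<open>\<open>outer_measure\<close> only uses disjoint covers; disjointing a cover lowers its sum\<close>
      have "range (disjointed F) \<subseteq> \<A>"
        using F \<A>.range_disjointed_sets by auto
      hence "disjointed F \<in> ?disjoint_covers"
        using F by (auto simp: disjoint_family_disjointed UN_disjointed_eq)
      hence "(INF F\<in>?disjoint_covers. \<Sum>i. M \<phi> (F i)) \<le> (\<Sum>i. M \<phi> (disjointed F i))"
        by (rule INF_lower)
      also have "\<dots> \<le> (\<Sum>i. M \<phi> (F i))"
        using \<open>range (disjointed F) \<subseteq> \<A>\<close> F
        by (intro suminf_le increasingD[OF M_increasing disjointed_subset]) auto
      finally show "(INF F\<in>?disjoint_covers. \<Sum>i. M \<phi> (F i)) \<le> (\<Sum>i. M \<phi> (F i))" .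
    qed
  qed
  thus "Mstar \<A> p \<phi> X = outer_measure \<A> (M \<phi>) X"
    unfolding Mstar_def outer_measure_def M_def .
qed

lemma measure_space_Mstar: "measure_space \<Omega> (Mphi_sets \<Omega> \<A> p \<phi>) (Mstar \<A> p \<phi>)"
  unfolding Mphi_sets_def Mstar_eq_outer_measure
  using \<A>.outer_measure_space_outer_measure[OF M_positive M_increasing]
  by (rule sigma_algebra.caratheodory_lemma[OF sigma_algebra_Pow])

lemma sigma_algebra_Mphi_sets: "sigma_algebra \<Omega> (Mphi_sets \<Omega> \<A> p \<phi>)"
  using measure_space_Mstar by (simp add: measure_space_def)

lemma algebra_subset_Mphi_sets: "\<A> \<subseteq> Mphi_sets \<Omega> \<A> p \<phi>"
  unfolding Mphi_sets_def Mstar_eq_outer_measure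
  using M_positive M_increasing \<A>.countably_additive_additive[OF M_positive M_countably_additive]
  by (rule \<A>.algebra_subset_lambda_system)

lemma Mstar_eq_M: "A \<in> \<A> \<Longrightarrow> Mstar \<A> p \<phi> A = M \<phi> A"
  unfolding Mstar_eq_outer_measure
  using M_positive M_countably_additive by (rule \<A>.outer_measure_agrees)

lemma sigma_algebra_Msets: "sigma_algebra \<Omega> (Msets \<Omega> \<A> p)"
  unfolding sigma_algebra_iff2
proof (intro conjI ballI allI impI)
  have Mphi: "Mphi_sets \<Omega> \<A> p \<phi> \<subseteq> Pow \<Omega>" "{} \<in> Mphi_sets \<Omega> \<A> p \<phi>"
    "\<And>s. s \<in> Mphi_sets \<Omega> \<A> p \<phi> \<Longrightarrow> \<Omega> - s \<in> Mphi_sets \<Omega> \<A> p \<phi>"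
    "\<And>A. range A \<subseteq> Mphi_sets \<Omega> \<A> p \<phi> \<Longrightarrow> (\<Union>i::nat. A i) \<in> Mphi_sets \<Omega> \<A> p \<phi>" for \<phi>
    using sigma_algebra_Mphi_sets[of \<phi>] unfolding sigma_algebra_iff2 by auto
  show "Msets \<Omega> \<A> p \<subseteq> Pow \<Omega>"
    unfolding Msets_def using Mphi(1)[of 0] by blast
  show "{} \<in> Msets \<Omega> \<A> p"
    unfolding Msets_def using Mphi(2) by simp
  show "\<Omega> - s \<in> Msets \<Omega> \<A> p" if "s \<in> Msets \<Omega> \<A> p" for s
    using that Mphi(3) unfolding Msets_def by simp
  show "(\<Union>i. A i) \<in> Msets \<Omega> \<A> p" if "range A \<subseteq> Msets \<Omega> \<A> p" for A :: "nat \<Rightarrow> 'b set"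
  proof -
    have "range A \<subseteq> Mphi_sets \<Omega> \<A> p \<phi>" for \<phi>
      using that unfolding Msets_def by blast
    thus ?thesis using Mphi(4) unfolding Msets_def by simp
  qed
qed

interpretation Msets: sigma_algebra \<Omega> "Msets \<Omega> \<A> p"
  by (rule sigma_algebra_Msets)

lemma algebra_subset_Msets: "\<A> \<subseteq> Msets \<Omega> \<A> p"
  unfolding Msets_def using algebra_subset_Mphi_sets by blast

lemma sigma_sets_subset_Msets: "sigma_sets \<Omega> \<A> \<subseteq> Msets \<Omega> \<A> p"
  by (rule sigma_algebra.sigma_sets_subset[OF sigma_algebra_Msets algebra_subset_Msets])

lemma Msets_subset_Mphi_sets: "Msets \<Omega> \<A> p \<subseteq> Mphi_sets \<Omega> \<A> p \<phi>"
  unfolding Msets_def by blast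

lemma Msets_subset_space: "A \<in> Msets \<Omega> \<A> p \<Longrightarrow> A \<subseteq> \<Omega>"
  using Msets.sets_into_space .

lemma Mstar_mono: "X \<subseteq> Y \<Longrightarrow> Mstar \<A> p \<phi> X \<le> Mstar \<A> p \<phi> Y"
  unfolding Mstar_def by (rule INF_superset_mono) auto

lemma Mstar_le_norm: "X \<subseteq> \<Omega> \<Longrightarrow> Mstar \<A> p \<phi> X \<le> ennreal ((norm \<phi>)\<^sup>2)"
  using Mstar_mono[of X \<Omega> \<phi>] Mstar_eq_M[OF \<A>.top, of \<phi>] pvm_p
  by (simp add: M_def is_pvm_def)

text \<open>\<open>M\<^sup>*\<^sub>\<phi>\<close> as a real number: finite on subsets of \<open>\<Omega>\<close>, where it is bounded by
  \<open>M\<^sup>*\<^sub>\<phi>(\<Omega>) = \<parallel>\<phi>\<parallel>\<^sup>2\<close>; \<open>enn2real\<close> would turn \<open>\<infinity>\<close> into \<open>0\<close> elsewhere.\<close>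
definition outer_mass :: "'a \<Rightarrow> 'b set \<Rightarrow> real" where
  "outer_mass \<phi> X = enn2real (Mstar \<A> p \<phi> X)"

lemma Mstar_eq_outer_mass:
  assumes "X \<subseteq> \<Omega>"
  shows "Mstar \<A> p \<phi> X = ennreal (outer_mass \<phi> X)"
proof -
  have "Mstar \<A> p \<phi> X < top"
    using Mstar_le_norm[OF assms] ennreal_less_top by (rule le_less_trans)
  thus ?thesis unfolding outer_mass_def by simp
qed

lemma outer_mass_nonneg: "outer_mass \<phi> X \<ge> 0"
  unfolding outer_mass_def by simp

lemma outer_mass_mono: "X \<subseteq> Y \<Longrightarrow> Y \<subseteq> \<Omega> \<Longrightarrow> outer_mass \<phi> X \<le> outer_mass \<phi> Y"
  using Mstar_mono[of X Y \<phi>] Mstar_eq_outer_mass[of X \<phi>] Mstar_eq_outer_mass[of Y \<phi>]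
  by (simp add: outer_mass_nonneg)

lemma outer_mass_le_norm: "X \<subseteq> \<Omega> \<Longrightarrow> outer_mass \<phi> X \<le> (norm \<phi>)\<^sup>2"
  using Mstar_le_norm[of X \<phi>] Mstar_eq_outer_mass[of X \<phi>] by simp

lemma outer_mass_eq_norm: "A \<in> \<A> \<Longrightarrow> outer_mass \<phi> A = (norm (p A \<phi>))\<^sup>2"
  unfolding outer_mass_def Mstar_eq_M M_def by simp

definition Mmeasure :: "'a \<Rightarrow> 'b measure" where
  "Mmeasure \<phi> = measure_of \<Omega> (Mphi_sets \<Omega> \<A> p \<phi>) (Mstar \<A> p \<phi>)"

lemma sets_Mmeasure: "sets (Mmeasure \<phi>) = Mphi_sets \<Omega> \<A> p \<phi>"
  unfolding Mmeasure_def by (rule sigma_algebra.sets_measure_of_eq[OF sigma_algebra_Mphi_sets])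

lemma emeasure_Mmeasure: "X \<in> Mphi_sets \<Omega> \<A> p \<phi> \<Longrightarrow> emeasure (Mmeasure \<phi>) X = Mstar \<A> p \<phi> X"
  unfolding Mmeasure_def using measure_space_Mstar
  by (intro emeasure_measure_of_sigma) (auto simp: measure_space_def)

lemma finite_measure_Mmeasure: "finite_measure (Mmeasure \<phi>)"
proof (rule finite_measureI)
  have "space (Mmeasure \<phi>) = \<Omega>"
    unfolding Mmeasure_def by (rule sigma_algebra.space_measure_of_eq[OF sigma_algebra_Mphi_sets])
  moreover have "\<Omega> \<in> Mphi_sets \<Omega> \<A> p \<phi>"
    using algebra_subset_Mphi_sets \<A>.top by blast
  ultimately show "emeasure (Mmeasure \<phi>) (space (Mmeasure \<phi>)) \<noteq> \<infinity>"
    using Mstar_le_norm[of \<Omega> \<phi>] by (auto simp: emeasure_Mmeasure top_unique)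
qed

lemma measure_Mmeasure: "X \<in> Msets \<Omega> \<A> p \<Longrightarrow> measure (Mmeasure \<phi>) X = outer_mass \<phi> X"
  using emeasure_Mmeasure[OF Msets_subset_Mphi_sets[THEN subsetD]]
  by (simp add: measure_def outer_mass_def)

lemma Msets_subset_sets_Mmeasure: "Msets \<Omega> \<A> p \<subseteq> sets (Mmeasure \<phi>)"
  unfolding sets_Mmeasure by (rule Msets_subset_Mphi_sets)

lemma outer_mass_Un:
  assumes "A \<in> Msets \<Omega> \<A> p" "B \<in> Msets \<Omega> \<A> p" "A \<inter> B = {}"
  shows "outer_mass \<phi> (A \<union> B) = outer_mass \<phi> A + outer_mass \<phi> B"
proof -
  interpret finite_measure "Mmeasure \<phi>" by (rule finite_measure_Mmeasure)
  have "A \<union> B \<in> Msets \<Omega> \<A> p" using assms(1,2) by (rule Msets.Un)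
  with assms Msets_subset_sets_Mmeasure finite_measure_Union[of A B]
  show ?thesis by (simp add: measure_Mmeasure subset_eq)
qed

lemma outer_mass_sums:
  assumes "range D \<subseteq> Msets \<Omega> \<A> p" "disjoint_family D"
  shows "(\<lambda>i. outer_mass \<phi> (D i)) sums outer_mass \<phi> (\<Union>i. D i)"
proof -
  interpret finite_measure "Mmeasure \<phi>" by (rule finite_measure_Mmeasure)
  have "(\<Union>i. D i) \<in> Msets \<Omega> \<A> p"
    using assms(1) by (rule Msets.countable_UN)
  with assms Msets_subset_sets_Mmeasure finite_measure_UNION[of D]
  show ?thesis by (simp add: measure_Mmeasure subset_eq)
qed

lemma outer_mass_incseq:
  assumes "range S \<subseteq> Msets \<Omega> \<A> p" "incseq S"
  shows "(\<lambda>n. outer_mass \<phi> (S n)) \<longlonglongrightarrow> outer_mass \<phi> (\<Union>n. S n)"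
proof -
  interpret finite_measure "Mmeasure \<phi>" by (rule finite_measure_Mmeasure)
  have "(\<Union>n. S n) \<in> Msets \<Omega> \<A> p"
    using assms(1) by (rule Msets.countable_UN)
  with assms Msets_subset_sets_Mmeasure finite_Lim_measure_incseq[of S]
  show ?thesis by (simp add: measure_Mmeasure subset_eq)
qed

lemma sigma_unions_subset_Msets: "sigma_unions \<A> \<subseteq> Msets \<Omega> \<A> p"
proof
  fix B assume "B \<in> sigma_unions \<A>"
  then obtain F :: "nat \<Rightarrow> 'b set" where F: "range F \<subseteq> \<A>" "B = (\<Union>i. F i)"
    by (rule sigma_unionsE)
  have "F i \<in> sigma_sets \<Omega> \<A>" for i using F(1) by (intro sigma_sets.Basic) blast
  hence "B \<in> sigma_sets \<Omega> \<A>" unfolding F(2) by (rule sigma_sets.Union)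
  thus "B \<in> Msets \<Omega> \<A> p" using sigma_sets_subset_Msets by blast
qed

lemma sigma_unions_subset_space: "B \<in> sigma_unions \<A> \<Longrightarrow> B \<subseteq> \<Omega>"
  using sigma_unions_subset_Msets Msets_subset_space by blast

lemma exists_projection_sigma_unions:
  assumes "B \<in> sigma_unions \<A>"
  shows "\<exists>P. is_projection J P \<and> (\<forall>\<phi>. (norm (P \<phi>))\<^sup>2 = outer_mass \<phi> B)"
proof -
  obtain D :: "nat \<Rightarrow> 'b set" where D: "range D \<subseteq> \<A>" "disjoint_family D" "B = (\<Union>i. D i)"
    using assms by (rule \<A>.sigma_unions_disjoint)
  have projection: "is_projection J (p (D i))" for i
    using D(1) by (intro is_pvm_projection[OF pvm_p]) auto
  have orth: "inner (p (D i) \<phi>) (p (D j) \<phi>) = 0" if "i \<noteq> j" for i j \<phi>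
    using D(1,2) that by (intro pvm_orthogonal[OF pvm_p algebra_\<A>]) (auto simp: disjoint_family_on_def)
  have sums: "(\<lambda>i. (norm (p (D i) \<phi>))\<^sup>2) sums outer_mass \<phi> B" for \<phi>
  proof -
    have "range D \<subseteq> Msets \<Omega> \<A> p" using D(1) algebra_subset_Msets by blast
    from outer_mass_sums[OF this D(2)]
    have "(\<lambda>i. outer_mass \<phi> (D i)) sums outer_mass \<phi> B" by (simp add: D(3))
    moreover have "outer_mass \<phi> (D i) = (norm (p (D i) \<phi>))\<^sup>2" for i
      using D(1) by (intro outer_mass_eq_norm) auto
    ultimately show ?thesis by simp
  qed
  define P where "P \<phi> = (\<Sum>i. p (D i) \<phi>)" for \<phi>
  have "is_projection J P"
    unfolding P_def using complex_J projection orth sums_summable[OF sums] by (rule projection_suminf)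
  moreover have "(norm (P \<phi>))\<^sup>2 = outer_mass \<phi> B" for \<phi>
    unfolding P_def
    using sums_norm_sq_orthogonal[of "\<lambda>i. p (D i) \<phi>", OF orth sums_summable[OF sums]] sums
    by (rule sums_unique2)
  ultimately show ?thesis by blast
qed

text \<open>The projection of \<open>B \<in> \<A>\<^sub>\<sigma>\<close>: the strong sum of the \<open>p (D i)\<close> over a disjoint
  decomposition of \<open>B\<close> into sets of \<open>\<A>\<close>.  A projection is determined by its norms, so the
  choice is immaterial.\<close>
definition p_sigma :: "'b set \<Rightarrow> 'a \<Rightarrow> 'a" where
  "p_sigma B = (SOME P. is_projection J P \<and> (\<forall>\<phi>. (norm (P \<phi>))\<^sup>2 = outer_mass \<phi> B))"

lemma
  assumes "B \<in> sigma_unions \<A>"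
  shows projection_p_sigma: "is_projection J (p_sigma B)"
    and norm_p_sigma: "(norm (p_sigma B \<phi>))\<^sup>2 = outer_mass \<phi> B"
  using someI_ex[OF exists_projection_sigma_unions[OF assms]] unfolding p_sigma_def by auto

lemma p_sigma_fixed_iff:
  assumes "B \<in> sigma_unions \<A>"
  shows "p_sigma B \<phi> = \<phi> \<longleftrightarrow> outer_mass \<phi> B = (norm \<phi>)\<^sup>2"
proof -
  have "p_sigma B \<phi> = \<phi> \<longleftrightarrow> norm (p_sigma B \<phi>) = norm \<phi>"
    by (rule projection_fixed_iff_norm[OF projection_p_sigma[OF assms]])
  also have "\<dots> \<longleftrightarrow> outer_mass \<phi> B = (norm \<phi>)\<^sup>2"
    by (simp add: power2_eq_iff_nonneg flip: norm_p_sigma[OF assms])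
  finally show ?thesis .
qed

lemma p_sigma_fixed_mono:
  assumes "B \<in> sigma_unions \<A>" "B' \<in> sigma_unions \<A>" "B \<subseteq> B'" "p_sigma B \<phi> = \<phi>"
  shows "p_sigma B' \<phi> = \<phi>"
proof -
  have "(norm \<phi>)\<^sup>2 = outer_mass \<phi> B" using p_sigma_fixed_iff[OF assms(1)] assms(4) by simp
  also have "\<dots> \<le> outer_mass \<phi> B'" by (rule outer_mass_mono[OF assms(3) sigma_unions_subset_space[OF assms(2)]])
  finally have "outer_mass \<phi> B' = (norm \<phi>)\<^sup>2"
    using outer_mass_le_norm[OF sigma_unions_subset_space[OF assms(2)]] by (intro antisym)
  thus ?thesis using p_sigma_fixed_iff[OF assms(2)] by simp
qed

lemma norm_p_sigma_diff:
  assumes "B \<in> sigma_unions \<A>" "B' \<in> sigma_unions \<A>" "B' \<subseteq> B"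
  shows "(norm (p_sigma B \<phi> - p_sigma B' \<phi>))\<^sup>2 = outer_mass \<phi> B - outer_mass \<phi> B'"
proof -
  note P = projection_p_sigma[OF assms(1)] and P' = projection_p_sigma[OF assms(2)]
  define \<psi> where "\<psi> = p_sigma B' \<phi>"
  have "p_sigma B \<psi> = \<psi>"
    unfolding \<psi>_def using projection_idem[OF P'] by (rule p_sigma_fixed_mono[OF assms(2,1,3)])
  hence "inner (p_sigma B \<phi>) \<psi> = inner \<psi> \<phi>"
    using projection_self_adjoint[OF P, of \<phi> \<psi>] by (simp add: inner_commute)
  also have "\<dots> = (norm \<psi>)\<^sup>2"
    unfolding \<psi>_def using projection_inner_self[OF P'] by (simp add: inner_commute)
  finally have "inner (p_sigma B \<phi>) \<psi> = (norm \<psi>)\<^sup>2" .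
  hence "(norm (p_sigma B \<phi> - \<psi>))\<^sup>2 = (norm (p_sigma B \<phi>))\<^sup>2 - (norm \<psi>)\<^sup>2"
    by (simp add: power2_norm_eq_inner inner_diff_left inner_diff_right inner_commute)
  thus ?thesis unfolding \<psi>_def by (simp add: norm_p_sigma assms(1,2))
qed

text \<open>The paper's \<open>\<Inter>{\<H>\<^sub>B | B \<in> \<A>\<^sub>\<sigma>, A \<subseteq> B}\<close>; the extension of \<open>p\<close> is the orthogonal
  projection onto it.\<close>
definition cover_subspace :: "'b set \<Rightarrow> 'a set" where
  "cover_subspace A = \<Inter>{{\<phi>. p_sigma B \<phi> = \<phi>} | B. B \<in> sigma_unions \<A> \<and> A \<subseteq> B}"

lemma cover_subspaceI:
  "(\<And>B. B \<in> sigma_unions \<A> \<Longrightarrow> A \<subseteq> B \<Longrightarrow> p_sigma B \<phi> = \<phi>) \<Longrightarrow> \<phi> \<in> cover_subspace A"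
  unfolding cover_subspace_def by blast

lemma cover_subspaceD:
  "\<phi> \<in> cover_subspace A \<Longrightarrow> B \<in> sigma_unions \<A> \<Longrightarrow> A \<subseteq> B \<Longrightarrow> p_sigma B \<phi> = \<phi>"
  unfolding cover_subspace_def by blast

lemma subspace_cover_subspace: "subspace (cover_subspace A)"
  unfolding subspace_def
proof (intro conjI ballI allI)
  have linear: "B \<in> sigma_unions \<A> \<Longrightarrow> linear (p_sigma B)" for B
    by (rule projection_linear[OF projection_p_sigma])
  show "0 \<in> cover_subspace A"
    by (intro cover_subspaceI) (simp add: linear_0[OF linear])
  show "x + y \<in> cover_subspace A" if "x \<in> cover_subspace A" "y \<in> cover_subspace A" for x y
    using that by (intro cover_subspaceI) (simp add: linear_add[OF linear] cover_subspaceD)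
  show "c *\<^sub>R x \<in> cover_subspace A" if "x \<in> cover_subspace A" for c x
    using that by (intro cover_subspaceI) (simp add: linear_scale[OF linear] cover_subspaceD)
qed

lemma cover_subspace_J: "\<phi> \<in> cover_subspace A \<Longrightarrow> J \<phi> \<in> cover_subspace A"
  by (intro cover_subspaceI) (simp add: projection_commute_J[OF projection_p_sigma] cover_subspaceD)

lemma outer_mass_approx:
  assumes "A \<subseteq> \<Omega>" "e > 0"
  shows "\<exists>B. B \<in> sigma_unions \<A> \<and> A \<subseteq> B \<and> outer_mass \<phi> B < outer_mass \<phi> A + e"
proof -
  have "Mstar \<A> p \<phi> A < ennreal (outer_mass \<phi> A + e)"
    using assms outer_mass_nonneg[of \<phi> A] by (simp add: Mstar_eq_outer_mass ennreal_lessI)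
  then obtain F where F: "range F \<subseteq> \<A>" "A \<subseteq> (\<Union>i. F i)"
    and less: "(\<Sum>i. ennreal ((norm (p (F i) \<phi>))\<^sup>2)) < ennreal (outer_mass \<phi> A + e)"
    unfolding Mstar_def INF_less_iff by blast
  define B where "B = (\<Union>i. F i)"
  have B: "B \<in> sigma_unions \<A>" unfolding B_def using F(1) by (rule sigma_unionsI)
  have "Mstar \<A> p \<phi> B \<le> (\<Sum>i. ennreal ((norm (p (F i) \<phi>))\<^sup>2))"
    unfolding Mstar_def B_def using F(1) by (intro INF_lower) auto
  with less have "ennreal (outer_mass \<phi> B) < ennreal (outer_mass \<phi> A + e)"
    by (simp add: Mstar_eq_outer_mass[OF sigma_unions_subset_space[OF B], symmetric])
  hence "outer_mass \<phi> B < outer_mass \<phi> A + e"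
    by (simp add: ennreal_less_iff outer_mass_nonneg)
  with B F(2) show ?thesis unfolding B_def by blast
qed

lemma decseq_sigma_unions_approx:
  assumes "A \<subseteq> \<Omega>"
  obtains C where "decseq C" "\<And>n. C n \<in> sigma_unions \<A>" "\<And>n. A \<subseteq> C n"
    "(\<lambda>n. outer_mass \<phi> (C n)) \<longlonglongrightarrow> outer_mass \<phi> A"
proof -
  have "\<forall>n. \<exists>B. B \<in> sigma_unions \<A> \<and> A \<subseteq> B \<and> outer_mass \<phi> B < outer_mass \<phi> A + inverse (Suc n)"
    using outer_mass_approx[OF assms] by simp
  then obtain B where B: "\<And>n. B n \<in> sigma_unions \<A>" "\<And>n. A \<subseteq> B n"
    "\<And>n. outer_mass \<phi> (B n) < outer_mass \<phi> A + inverse (Suc n)"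
    by (auto dest!: choice)
  define C where "C n = (\<Inter>i\<le>n. B i)" for n
  have C_Suc: "C (Suc n) = B (Suc n) \<inter> C n" for n
    unfolding C_def by (simp add: atMost_Suc)
  have C: "C n \<in> sigma_unions \<A>" for n
  proof (induction n)
    case 0 show ?case by (simp add: C_def B(1))
  next
    case (Suc n) thus ?case by (simp add: C_Suc \<A>.sigma_unions_Int B(1))
  qed
  have "decseq C" by (rule decseq_SucI) (simp add: C_Suc)
  moreover have A_C: "A \<subseteq> C n" for n unfolding C_def using B(2) by blast
  moreover have "(\<lambda>n. outer_mass \<phi> (C n)) \<longlonglongrightarrow> outer_mass \<phi> A"
  proof (rule tendsto_sandwich[of "\<lambda>_. outer_mass \<phi> A" _ _ "\<lambda>n. outer_mass \<phi> A + inverse (Suc n)"])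
    show "\<forall>\<^sub>F n in sequentially. outer_mass \<phi> A \<le> outer_mass \<phi> (C n)"
      using outer_mass_mono[OF A_C sigma_unions_subset_space[OF C]] by simp
    have C_B: "outer_mass \<phi> (C n) \<le> outer_mass \<phi> (B n)" for n
      using outer_mass_mono[of "C n" "B n"] sigma_unions_subset_space[OF B(1)] unfolding C_def by blast
    have "outer_mass \<phi> (C n) \<le> outer_mass \<phi> A + inverse (Suc n)" for n
      using C_B[of n] B(3)[of n] by linarith
    thus "\<forall>\<^sub>F n in sequentially. outer_mass \<phi> (C n) \<le> outer_mass \<phi> A + inverse (Suc n)"
      by simp
    show "(\<lambda>n. outer_mass \<phi> A + inverse (Suc n)) \<longlonglongrightarrow> outer_mass \<phi> A"
      using tendsto_add[OF tendsto_const LIMSEQ_inverse_real_of_nat] by simp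
  qed simp
  ultimately show ?thesis using that C by blast
qed

lemma p_sigma_decseq_convergent:
  assumes "decseq C" "\<And>n. C n \<in> sigma_unions \<A>" "convergent (\<lambda>n. outer_mass \<phi> (C n))"
  shows "convergent (\<lambda>n. p_sigma (C n) \<phi>)"
proof (rule Cauchy_convergent, rule Cauchy_if_norm_sq_diff_le[OF assms(3)])
  fix m n :: nat assume "m \<le> n"
  hence "C n \<subseteq> C m" using assms(1) by (simp add: decseq_def)
  thus "(norm (p_sigma (C m) \<phi> - p_sigma (C n) \<phi>))\<^sup>2 \<le> \<bar>outer_mass \<phi> (C m) - outer_mass \<phi> (C n)\<bar>"
    by (simp add: norm_p_sigma_diff assms(2))
qed

lemma p_sigma_limit_in_cover_subspace:
  assumes C: "\<And>n. C n \<in> sigma_unions \<A>" "\<And>n. A \<subseteq> C n"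
    "(\<lambda>n. outer_mass \<phi> (C n)) \<longlonglongrightarrow> outer_mass \<phi> A"
    and lim: "(\<lambda>n. p_sigma (C n) \<phi>) \<longlonglongrightarrow> \<psi>"
  shows "\<psi> \<in> cover_subspace A"
proof (rule cover_subspaceI)
  fix B assume B: "B \<in> sigma_unions \<A>" "A \<subseteq> B"
  \<comment> \<open>\<open>C n \<inter> B\<close> approximates \<open>A\<close> as well as \<open>C n\<close> does, and \<open>p_sigma B\<close> fixes its range\<close>
  define D where "D n = C n \<inter> B" for n
  have D: "D n \<in> sigma_unions \<A>" "D n \<subseteq> C n" "A \<subseteq> D n" "D n \<subseteq> B" for n
    unfolding D_def using \<A>.sigma_unions_Int[OF C(1) B(1)] C(2) B(2) by auto
  have "(\<lambda>n. (norm (p_sigma (C n) \<phi> - p_sigma (D n) \<phi>))\<^sup>2) \<longlonglongrightarrow> 0"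
  proof (rule tendsto_sandwich[of "\<lambda>_. 0" _ _ "\<lambda>n. outer_mass \<phi> (C n) - outer_mass \<phi> A"])
    have "outer_mass \<phi> A \<le> outer_mass \<phi> (D n)" for n
      by (rule outer_mass_mono[OF D(3) sigma_unions_subset_space[OF D(1)]])
    thus "\<forall>\<^sub>F n in sequentially. (norm (p_sigma (C n) \<phi> - p_sigma (D n) \<phi>))\<^sup>2
        \<le> outer_mass \<phi> (C n) - outer_mass \<phi> A"
      by (simp add: norm_p_sigma_diff C(1) D(1,2))
    show "(\<lambda>n. outer_mass \<phi> (C n) - outer_mass \<phi> A) \<longlonglongrightarrow> 0"
      using tendsto_diff[OF C(3) tendsto_const[of "outer_mass \<phi> A"]] by simp
  qed simp_all
  hence lim_D: "(\<lambda>n. p_sigma (D n) \<phi>) \<longlonglongrightarrow> \<psi>"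
    using lim by (rule tendsto_if_norm_sq_diff_tendsto_0)
  have "p_sigma B (p_sigma (D n) \<phi>) = p_sigma (D n) \<phi>" for n
    using projection_idem[OF projection_p_sigma[OF D(1)]] by (rule p_sigma_fixed_mono[OF D(1) B(1) D(4)])
  moreover have "(\<lambda>n. p_sigma B (p_sigma (D n) \<phi>)) \<longlonglongrightarrow> p_sigma B \<psi>"
    using projection_bounded_linear[OF projection_p_sigma[OF B(1)]] lim_D by (rule bounded_linear.tendsto)
  ultimately have "(\<lambda>n. p_sigma (D n) \<phi>) \<longlonglongrightarrow> p_sigma B \<psi>" by simp
  thus "p_sigma B \<psi> = \<psi>" using lim_D by (rule LIMSEQ_unique)
qed

lemma cover_subspace_decomposition:
  assumes "A \<subseteq> \<Omega>"
  shows "\<exists>\<psi>\<in>cover_subspace A. (\<forall>\<eta>\<in>cover_subspace A. inner (\<phi> - \<psi>) \<eta> = 0)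
    \<and> (norm \<psi>)\<^sup>2 = outer_mass \<phi> A"
proof -
  obtain C :: "nat \<Rightarrow> 'b set" where C: "decseq C" "\<And>n. C n \<in> sigma_unions \<A>" "\<And>n. A \<subseteq> C n"
    "(\<lambda>n. outer_mass \<phi> (C n)) \<longlonglongrightarrow> outer_mass \<phi> A"
    using decseq_sigma_unions_approx[OF assms, where \<phi> = \<phi>] by blast
  have "convergent (\<lambda>n. p_sigma (C n) \<phi>)"
    using C(1,2) by (rule p_sigma_decseq_convergent) (use C(4) in \<open>auto simp: convergent_def\<close>)
  then obtain \<psi> where lim: "(\<lambda>n. p_sigma (C n) \<phi>) \<longlonglongrightarrow> \<psi>"
    unfolding convergent_def by blast
  have "\<psi> \<in> cover_subspace A"
    by (rule p_sigma_limit_in_cover_subspace[OF C(2-4) lim])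
  moreover have "inner (\<phi> - \<psi>) \<eta> = 0" if "\<eta> \<in> cover_subspace A" for \<eta>
  proof -
    have "inner (\<phi> - p_sigma (C n) \<phi>) \<eta> = 0" for n
      using projection_self_adjoint[OF projection_p_sigma[OF C(2)], of n \<phi> \<eta>]
        cover_subspaceD[OF that C(2,3)]
      by (simp add: inner_diff_left)
    moreover have "(\<lambda>n. inner (\<phi> - p_sigma (C n) \<phi>) \<eta>) \<longlonglongrightarrow> inner (\<phi> - \<psi>) \<eta>"
      using lim by (intro tendsto_intros)
    ultimately show ?thesis by (simp add: LIMSEQ_const_iff)
  qed
  moreover have "(norm \<psi>)\<^sup>2 = outer_mass \<phi> A"
  proof -
    have "(\<lambda>n. (norm (p_sigma (C n) \<phi>))\<^sup>2) \<longlonglongrightarrow> (norm \<psi>)\<^sup>2"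
      using lim by (intro tendsto_intros)
    hence "(\<lambda>n. outer_mass \<phi> (C n)) \<longlonglongrightarrow> (norm \<psi>)\<^sup>2"
      by (simp add: norm_p_sigma[OF C(2)])
    thus ?thesis using C(4) by (rule LIMSEQ_unique)
  qed
  ultimately show ?thesis by blast
qed

definition p_ext :: "'b set \<Rightarrow> 'a \<Rightarrow> 'a" where
  "p_ext A = orthogonal_projection (cover_subspace A)"

lemma
  assumes "A \<subseteq> \<Omega>"
  shows projection_p_ext: "is_projection J (p_ext A)"
    and range_p_ext: "range (p_ext A) = cover_subspace A"
proof -
  have decomposition: "\<exists>\<psi>\<in>cover_subspace A. \<forall>\<eta>\<in>cover_subspace A. inner (\<phi> - \<psi>) \<eta> = 0" for \<phi>
    using cover_subspace_decomposition[OF assms, of \<phi>] by blast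
  show "is_projection J (p_ext A)"
    unfolding p_ext_def using complex_J subspace_cover_subspace cover_subspace_J decomposition
    by (rule projection_orthogonal_projection)
  show "range (p_ext A) = cover_subspace A"
    unfolding p_ext_def using subspace_cover_subspace decomposition by (rule range_orthogonal_projection)
qed

lemma norm_p_ext:
  assumes "A \<subseteq> \<Omega>"
  shows "(norm (p_ext A \<phi>))\<^sup>2 = outer_mass \<phi> A"
proof -
  obtain \<psi> where \<psi>: "\<psi> \<in> cover_subspace A" "\<forall>\<eta>\<in>cover_subspace A. inner (\<phi> - \<psi>) \<eta> = 0"
    "(norm \<psi>)\<^sup>2 = outer_mass \<phi> A"
    using cover_subspace_decomposition[OF assms] by blast
  have "p_ext A \<phi> = \<psi>"
    unfolding p_ext_def using \<psi>(1,2) by (intro orthogonal_projection_eqI[OF subspace_cover_subspace]) auto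
  with \<psi>(3) show ?thesis by simp
qed

lemma p_ext_eq_p:
  assumes "A \<in> \<A>"
  shows "p_ext A = p A"
proof (rule projection_eqI)
  have A: "A \<subseteq> \<Omega>" using assms \<A>.sets_into_space by blast
  show "is_projection J (p_ext A)" by (rule projection_p_ext[OF A])
  show "is_projection J (p A)" by (rule is_pvm_projection[OF pvm_p assms])
  show "norm (p_ext A x) = norm (p A x)" for x
    using norm_p_ext[OF A, of x] outer_mass_eq_norm[OF assms, of x]
    by (simp add: power2_eq_iff_nonneg)
qed

lemma range_p_ext_iff:
  assumes "A \<subseteq> \<Omega>"
  shows "\<phi> \<in> range (p_ext A) \<longleftrightarrow> outer_mass \<phi> A = (norm \<phi>)\<^sup>2"
proof -
  note P = projection_p_ext[OF assms]
  have "\<phi> \<in> range (p_ext A) \<longleftrightarrow> norm (p_ext A \<phi>) = norm \<phi>"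
    using range_projection[OF P] projection_fixed_iff_norm[OF P] by simp
  also have "\<dots> \<longleftrightarrow> outer_mass \<phi> A = (norm \<phi>)\<^sup>2"
    by (simp add: power2_eq_iff_nonneg flip: norm_p_ext[OF assms])
  finally show ?thesis .
qed

lemma range_p_ext_eq_Mstar:
  assumes "A \<subseteq> \<Omega>"
  shows "range (p_ext A) = {\<phi>. Mstar \<A> p \<phi> A = ennreal ((norm \<phi>)\<^sup>2)}"
  using range_p_ext_iff[OF assms] by (auto simp: Mstar_eq_outer_mass[OF assms] outer_mass_nonneg)

lemma range_p_ext_eq_Inter:
  assumes "A \<subseteq> \<Omega>"
  shows "range (p_ext A) = \<Inter>{range (p_ext B) | B. B \<in> sigma_unions \<A> \<and> A \<subseteq> B}"
proof -
  have "range (p_ext B) = {\<phi>. p_sigma B \<phi> = \<phi>}" if "B \<in> sigma_unions \<A>" for B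
    using range_p_ext_iff[OF sigma_unions_subset_space[OF that]] p_sigma_fixed_iff[OF that] by blast
  hence "{range (p_ext B) | B. B \<in> sigma_unions \<A> \<and> A \<subseteq> B}
      = {{\<phi>. p_sigma B \<phi> = \<phi>} | B. B \<in> sigma_unions \<A> \<and> A \<subseteq> B}"
    by (intro Collect_cong) auto
  thus ?thesis unfolding range_p_ext[OF assms] cover_subspace_def by simp
qed

lemma Mstar_eq_norm_p_ext: "A \<subseteq> \<Omega> \<Longrightarrow> Mstar \<A> p \<phi> A = ennreal ((norm (p_ext A \<phi>))\<^sup>2)"
  by (simp add: Mstar_eq_outer_mass norm_p_ext)

lemma p_ext_Un:
  assumes "A \<in> Msets \<Omega> \<A> p" "B \<in> Msets \<Omega> \<A> p" "A \<inter> B = {}"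
  shows "p_ext (A \<union> B) x = p_ext A x + p_ext B x"
proof -
  have A: "A \<subseteq> \<Omega>" and B: "B \<subseteq> \<Omega>" using assms(1,2) Msets_subset_space by auto
  have "p_ext (A \<union> B) = (\<lambda>x. p_ext A x + p_ext B x)"
  proof (rule projection_add_eqI)
    show "is_projection J (p_ext A)" "is_projection J (p_ext B)" "is_projection J (p_ext (A \<union> B))"
      using A B by (simp_all add: projection_p_ext)
    show "(norm (p_ext (A \<union> B) x))\<^sup>2 = (norm (p_ext A x))\<^sup>2 + (norm (p_ext B x))\<^sup>2" for x
      using A B by (simp add: norm_p_ext outer_mass_Un[OF assms])
  qed
  thus ?thesis by simp
qed

lemma p_ext_sum_lessThan:
  fixes n :: nat
  assumes F: "range F \<subseteq> Msets \<Omega> \<A> p" "disjoint_family F"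
  shows "(\<Sum>i<n. p_ext (F i) x) = p_ext (\<Union>i<n. F i) x"
proof (induction n)
  case 0
  show ?case using p_ext_eq_p[OF \<A>.empty_sets] pvm_empty[OF pvm_p \<A>.empty_sets] by simp
next
  case (Suc n)
  have "F i \<inter> F n = {}" if "i < n" for i
    using F(2) that unfolding disjoint_family_on_def by simp
  hence "(\<Union>i<Suc n. F i) = (\<Union>i<n. F i) \<union> F n" "(\<Union>i<n. F i) \<inter> F n = {}"
    by (auto simp: lessThan_Suc)
  moreover have "(\<Union>i<n. F i) \<in> Msets \<Omega> \<A> p" "F n \<in> Msets \<Omega> \<A> p"
    using F(1) by (auto intro: Msets.finite_UN)
  ultimately show ?case using Suc.IH p_ext_Un[of "\<Union>i<n. F i" "F n" x] by simp
qed

lemma p_ext_sums: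
  assumes F: "range F \<subseteq> Msets \<Omega> \<A> p" "disjoint_family F"
  shows "(\<lambda>i. p_ext (F i) x) sums p_ext (\<Union>i. F i) x"
proof -
  define S where "S n = (\<Union>i<n. F i)" for n
  define U where "U = (\<Union>i. F i)"
  have S: "S n \<in> Msets \<Omega> \<A> p" for n
    unfolding S_def using F(1) by (intro Msets.finite_UN) auto
  have U: "U \<in> Msets \<Omega> \<A> p"
    unfolding U_def using F(1) by (rule Msets.countable_UN)
  have "(norm (p_ext U x - p_ext (S n) x))\<^sup>2 = outer_mass x U - outer_mass x (S n)" for n
  proof -
    have R: "U - S n \<in> Msets \<Omega> \<A> p" using U S by (rule Msets.Diff)
    have U_split: "U = S n \<union> (U - S n)" "S n \<inter> (U - S n) = {}"
      unfolding U_def S_def by auto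
    have "p_ext U x - p_ext (S n) x = p_ext (U - S n) x"
      using p_ext_Un[OF S R U_split(2)] U_split(1) by simp
    thus ?thesis
      using outer_mass_Un[OF S R U_split(2)] U_split(1) norm_p_ext[OF Msets_subset_space[OF R]] by simp
  qed
  moreover have "(\<lambda>n. outer_mass x (S n)) \<longlonglongrightarrow> outer_mass x U"
  proof -
    have "incseq S" unfolding S_def incseq_def by (auto intro: order.strict_trans2)
    moreover have "(\<Union>n. S n) = U" unfolding S_def U_def by auto
    ultimately show ?thesis using outer_mass_incseq[of S x] S by auto
  qed
  ultimately have "(\<lambda>n. (norm (p_ext U x - p_ext (S n) x))\<^sup>2) \<longlonglongrightarrow> 0"
    using tendsto_diff[OF tendsto_const[of "outer_mass x U"]] by fastforce
  hence "(\<lambda>n. p_ext (S n) x) \<longlonglongrightarrow> p_ext U x"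
    by (rule tendsto_if_norm_sq_diff_tendsto_0) (rule tendsto_const)
  thus ?thesis unfolding sums_def S_def U_def p_ext_sum_lessThan[OF F] .
qed

lemma is_pvm_p_ext: "is_pvm J \<Omega> (Msets \<Omega> \<A> p) p_ext"
  unfolding is_pvm_def
proof (intro conjI ballI allI impI)
  show "is_projection J (p_ext A)" if "A \<in> Msets \<Omega> \<A> p" for A
    using that by (intro projection_p_ext Msets_subset_space)
  show "p_ext \<Omega> = id"
    using p_ext_eq_p[OF \<A>.top] pvm_p by (simp add: is_pvm_def)
qed (rule p_ext_sums)

end

theorem theorem5:
  fixes J :: "'a::{real_inner, complete_space} \<Rightarrow> 'a"
    and \<Omega> :: "'b set" and \<A> :: "'b set set" and p :: "'b set \<Rightarrow> 'a \<Rightarrow> 'a"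
  assumes "complex_structure J"
    and "algebra \<Omega> \<A>"
    and "is_pvm J \<Omega> \<A> p"
  shows "\<exists>q. is_pvm J \<Omega> (Msets \<Omega> \<A> p) q
           \<and> (\<forall>A\<in>\<A>. q A = p A)
           \<and> (\<forall>\<phi>. \<forall>A\<in>Msets \<Omega> \<A> p. ennreal ((norm (q A \<phi>))\<^sup>2) = Mstar \<A> p \<phi> A)
           \<and> (\<forall>A\<in>Msets \<Omega> \<A> p.
                range (q A) = {\<phi>. Mstar \<A> p \<phi> A = ennreal ((norm \<phi>)\<^sup>2)}
              \<and> range (q A) = \<Inter>{range (q B) | B. B \<in> sigma_unions \<A> \<and> A \<subseteq> B})
           \<and> (\<forall>r. is_pvm J \<Omega> (sigma_sets \<Omega> \<A>) r \<and> (\<forall>A\<in>\<A>. r A = p A)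
                   \<longrightarrow> (\<forall>A\<in>sigma_sets \<Omega> \<A>. r A = q A))"
proof -
  interpret pvm_algebra J \<Omega> \<A> p by (rule pvm_algebra.intro[OF assms])
  have pvm_sigma_sets: "is_pvm J \<Omega> (sigma_sets \<Omega> \<A>) p_ext"
    using is_pvm_p_ext sigma_sets_subset_Msets by (rule is_pvm_subset)
  show ?thesis
  proof (intro exI[of _ p_ext] conjI ballI allI impI)
    show "is_pvm J \<Omega> (Msets \<Omega> \<A> p) p_ext" by (rule is_pvm_p_ext)
    show "p_ext A = p A" if "A \<in> \<A>" for A using that by (rule p_ext_eq_p)
    show "ennreal ((norm (p_ext A \<phi>))\<^sup>2) = Mstar \<A> p \<phi> A" if "A \<in> Msets \<Omega> \<A> p" for \<phi> A
      using Msets_subset_space[OF that] by (rule Mstar_eq_norm_p_ext[symmetric])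
    show "range (p_ext A) = {\<phi>. Mstar \<A> p \<phi> A = ennreal ((norm \<phi>)\<^sup>2)}" if "A \<in> Msets \<Omega> \<A> p" for A
      using Msets_subset_space[OF that] by (rule range_p_ext_eq_Mstar)
    show "range (p_ext A) = \<Inter>{range (p_ext B) | B. B \<in> sigma_unions \<A> \<and> A \<subseteq> B}"
      if "A \<in> Msets \<Omega> \<A> p" for A
      using Msets_subset_space[OF that] by (rule range_p_ext_eq_Inter)
    show "r A = p_ext A"
      if r: "is_pvm J \<Omega> (sigma_sets \<Omega> \<A>) r \<and> (\<forall>A\<in>\<A>. r A = p A)" and A: "A \<in> sigma_sets \<Omega> \<A>"
      for r A
    proof (rule pvm_sigma_sets_unique[OF assms(2) _ pvm_sigma_sets _ A])
      show "is_pvm J \<Omega> (sigma_sets \<Omega> \<A>) r" using r by blast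
      show "r B = p_ext B" if "B \<in> \<A>" for B using r that by (simp add: p_ext_eq_p)
    qed
  qed
qed

end
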